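(* Let $\mu_1,\mu_2$ be finite nonnegative Borel measures on $\mathcal{C}_*$ such that $\mu_1(\mathcal{E}^z)=\mu_2(\mathcal{E}^z)$ for all $z\in\chi$. Then $\mu_1=\mu_2$.
   Context: $\mathbb{S}=\mathbb{R}/\mathbb{Z}$; $\mathcal{C}_*=\mathcal{C}(\mathbb{S};[0,1])\setminus\{\mathbf0,\mathbf1\}$ with the uniform norm (continuous functions $\mathbb{S}\to[0,1]$ other than the constants $0$ and $1$). $\chi=(\bigcup_{n\ge1}\mathbb{S}^n/\sim)\times(\bigcup_{m\ge1}\mathbb{S}^m/\sim)$, where $\sim$ identifies tuples differing by a permutation of coordinates. For $f:\mathbb{S}\to[0,1]$ Borel and $z=((x_1,\dots,x_n),(y_1,\dots,y_m))\in\chi$, $\mathcal{E}^z(f)=\mathcal{E}(f,z)=\big[\prod_{i=1}^n(1-f(x_i))\big]\big[1-\prod_{j=1}^m(1-f(y_j))\big]$, and $\mu(\mathcal{E}^z)=\int\mathcal{E}^z(f)\,\mu(df)$. *)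

theory Defs
  imports "HOL-Analysis.Analysis"
begin

text \<open>The circle S = R/Z is represented by 1-periodic functions on the reals.\<close>

definition Cstar :: "(real \<Rightarrow>\<^sub>C real) set" where
  "Cstar = {f. (\<forall>x. apply_bcontfun f (x + 1) = apply_bcontfun f x)
              \<and> (\<forall>x. 0 \<le> apply_bcontfun f x \<and> apply_bcontfun f x \<le> 1)
              \<and> (\<exists>x. apply_bcontfun f x \<noteq> 0) \<and> (\<exists>x. apply_bcontfun f x \<noteq> 1)}"

text \<open>z = (xs, ys): nonempty finite families of points of S (given by real
  representatives; order is irrelevant since only products occur).\<close>

definition calE :: "real list \<Rightarrow> real list \<Rightarrow> (real \<Rightarrow>\<^sub>C real) \<Rightarrow> real" where
  "calE xs ys f = prod_list (map (\<lambda>x. 1 - apply_bcontfun f x) xs)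
                  * (1 - prod_list (map (\<lambda>y. 1 - apply_bcontfun f y) ys))"

end

theory Submission
  imports Defs
begin

(* Write gap w for the difference of the two integrals of prod_{y in w} (1 - f y). Since
   E^(xs,ys) = prod_{xs} (1 - f) - prod_{xs @ ys} (1 - f), the hypothesis says
   gap (xs @ ys) = gap xs for nonempty xs and ys; as the products are symmetric in the points,
   gap is constant on nonempty lists. Over the k-point grid of the circle, taken with
   multiplicity k, these products tend to 0 for every f in C_* (continuous and not identically 0),
   so the constant is 0. Expanding prod f = prod (1 - (1 - f)) and using the same limit for f not
   identically 1, which gives equal total masses, all mixed moments prod (1 - f x_i) * prod f y_j
   have equal integrals. By Bernstein approximation and bounded convergence, mixed moments
   determine the integrals of products of indicators of {f. f y in [a, b]}, i.e. the measures of
   cylinder sets; these form an Int-stable generator of the Borel sets of C_*, as C_* is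
   separable. *)

section \<open>Products over a grid on the circle\<close>

lemma prod_list_le_one:
  fixes xs :: "'a::linordered_idom list"
  assumes "\<And>x. x \<in> set xs \<Longrightarrow> 0 \<le> x \<and> x \<le> 1"
  shows "prod_list xs \<le> 1"
  using assms by (induction xs) (auto intro: mult_le_one prod_list_nonneg)

lemma prod_list_le_member:
  fixes xs :: "'a::linordered_idom list"
  assumes "\<And>x. x \<in> set xs \<Longrightarrow> 0 \<le> x \<and> x \<le> 1" and "z \<in> set xs"
  shows "prod_list xs \<le> z"
  using assms
proof (induction xs)
  case (Cons x xs)
  have x: "0 \<le> x" "x \<le> 1" and xs: "0 \<le> prod_list xs" "prod_list xs \<le> 1"
    using Cons.prems(1) by (auto intro: prod_list_nonneg prod_list_le_one)
  show ?case
  proof (cases "z = x")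
    case True
    then show ?thesis
      using mult_right_le_one_le[of x "prod_list xs"] x xs by simp
  next
    case False
    then have "prod_list xs \<le> z"
      using Cons by simp
    then show ?thesis
      using mult_left_le_one_le[of "prod_list xs" x] x xs by simp
  qed
qed simp

lemma floor_mult_div_approx:
  fixes x :: real
  assumes "0 \<le> x" "x < 1" "0 < k"
  shows "nat \<lfloor>real k * x\<rfloor> < k" "\<bar>real (nat \<lfloor>real k * x\<rfloor>) / real k - x\<bar> < 1 / real k"
proof -
  define j where "j = nat \<lfloor>real k * x\<rfloor>"
  have "0 \<le> \<lfloor>real k * x\<rfloor>" and "real k * x < real k"
    using assms by auto
  then have j: "real j \<le> real k * x" "real k * x < real j + 1"
    unfolding j_def by linarith+
  with \<open>real k * x < real k\<close> show "j < k"
    by linarith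
  have "\<bar>real j / real k - x\<bar> = \<bar>real j - real k * x\<bar> / real k"
    using assms(3) by (simp add: field_simps)
  also have "\<dots> < 1 / real k"
    using j assms(3) by (intro divide_strict_right_mono) auto
  finally show "\<bar>real j / real k - x\<bar> < 1 / real k" .
qed

definition grid :: "nat \<Rightarrow> real list" where
  "grid k = concat (replicate k (map (\<lambda>j. real j / real k) [0..<k]))"

lemma prod_list_concat_replicate: "prod_list (concat (replicate n xs)) = prod_list xs ^ n"
  by (induction n) auto

lemma prod_list_map_grid:
  "prod_list (map h (grid k)) = prod_list (map (\<lambda>j. h (real j / real k)) [0..<k]) ^ k"
  unfolding grid_def map_concat map_replicate prod_list_concat_replicate by (simp add: comp_def)

lemma prod_grid_le_power:
  fixes h :: "real \<Rightarrow> real"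
  assumes unit: "\<And>y. 0 \<le> h y \<and> h y \<le> 1" and x: "0 \<le> x" "x < 1" and "0 < k"
    and near: "\<And>y. \<bar>y - x\<bar> < 1 / real k \<Longrightarrow> h y \<le> c"
  shows "prod_list (map h (grid k)) \<le> c ^ k"
proof -
  define j where "j = nat \<lfloor>real k * x\<rfloor>"
  note j = floor_mult_div_approx[OF x \<open>0 < k\<close>, folded j_def]
  have "h (real j / real k) \<in> set (map (\<lambda>j. h (real j / real k)) [0..<k])"
    unfolding set_map using j(1) by (intro imageI) simp
  then have "prod_list (map (\<lambda>j. h (real j / real k)) [0..<k]) \<le> h (real j / real k)"
    using unit by (intro prod_list_le_member) auto
  also have "\<dots> \<le> c"
    by (rule near[OF j(2)])
  finally have "prod_list (map (\<lambda>j. h (real j / real k)) [0..<k]) \<le> c" .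
  moreover have "0 \<le> prod_list (map (\<lambda>j. h (real j / real k)) [0..<k])"
    using unit by (intro prod_list_nonneg) auto
  ultimately show ?thesis
    unfolding prod_list_map_grid by (rule power_mono)
qed

lemma prod_grid_tendsto_0:
  fixes h :: "real \<Rightarrow> real"
  assumes cont: "continuous_on UNIV h" and periodic: "\<And>x. h (x + 1) = h x"
    and unit: "\<And>x. 0 \<le> h x \<and> h x \<le> 1" and "h z \<noteq> 1"
  shows "(\<lambda>k. prod_list (map h (grid k))) \<longlonglongrightarrow> 0"
proof -
  interpret periodic_fun_simple' h
    by unfold_locales (rule periodic)
  define x where "x = frac z"
  have x: "0 \<le> x" "x < 1"
    unfolding x_def by (auto simp: frac_lt_1)
  have "h x = h z"
    unfolding x_def frac_def by (rule minus_of_int)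
  then have "h x < 1"
    using unit[of z] \<open>h z \<noteq> 1\<close> by linarith
  define d where "d = (1 - h x) / 2"
  have d: "0 < d" "d < 1" "2 * d = 1 - h x"
    using \<open>h x < 1\<close> unit[of x] by (auto simp: d_def)
  obtain \<eta> where "\<eta> > 0" and \<eta>: "\<And>y. dist y x < \<eta> \<Longrightarrow> dist (h y) (h x) < d"
    using cont d(1) unfolding continuous_on_iff by (metis UNIV_I)
  obtain N :: nat where "1 / \<eta> < real N"
    using reals_Archimedean2 by blast
  then have "1 < \<eta> * real N"
    using \<open>\<eta> > 0\<close> by (simp add: field_simps)
  have "prod_list (map h (grid k)) \<le> (1 - d) ^ k" if "Suc N \<le> k" for k
  proof (rule prod_grid_le_power[OF unit x])
    show "0 < k"
      using that by simp
    have "\<eta> * real N \<le> \<eta> * real k"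
      using that \<open>\<eta> > 0\<close> by (intro mult_left_mono) auto
    with \<open>1 < \<eta> * real N\<close> \<open>0 < k\<close> have "1 / real k < \<eta>"
      by (simp add: field_simps)
    fix y
    assume "\<bar>y - x\<bar> < 1 / real k"
    then have "dist y x < \<eta>"
      unfolding dist_real_def using \<open>1 / real k < \<eta>\<close> by (rule order.strict_trans)
    then have "dist (h y) (h x) < d"
      by (rule \<eta>)
    then show "h y \<le> 1 - d"
      using d(3) unfolding dist_real_def by linarith
  qed
  then have upper: "\<forall>\<^sub>F k in sequentially. prod_list (map h (grid k)) \<le> (1 - d) ^ k"
    by (rule eventually_sequentiallyI)
  have lower: "\<forall>\<^sub>F k in sequentially. 0 \<le> prod_list (map h (grid k))"
    by (intro always_eventually allI prod_list_nonneg) (use unit in auto)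
  have "(\<lambda>k. (1 - d) ^ k) \<longlonglongrightarrow> 0"
    using d by (intro LIMSEQ_realpow_zero) auto
  then show ?thesis
    by (rule tendsto_sandwich[OF lower upper tendsto_const])
qed

section \<open>Moments determine integrals against indicators of intervals\<close>

lemma (in finite_measure) integral_bounded_convergence:
  fixes g :: "nat \<Rightarrow> 'a \<Rightarrow> real"
  assumes "\<And>n. g n \<in> borel_measurable M" and "\<And>n x. x \<in> space M \<Longrightarrow> \<bar>g n x\<bar> \<le> B"
    and "\<And>x. x \<in> space M \<Longrightarrow> (\<lambda>n. g n x) \<longlonglongrightarrow> g' x"
  shows "(\<lambda>n. \<integral>x. g n x \<partial>M) \<longlonglongrightarrow> (\<integral>x. g' x \<partial>M)"
proof (rule integral_dominated_convergence[where w="\<lambda>_. B"])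
  show "g' \<in> borel_measurable M"
    using assms(3,1) by (rule borel_measurable_LIMSEQ_real)
qed (use assms in \<open>auto intro: AE_I2\<close>)

lemma Bernstein_sum_tendsto:
  fixes \<phi> :: "real \<Rightarrow> real"
  assumes "continuous_on {0..1} \<phi>" and "x \<in> {0..1}"
  shows "(\<lambda>n. \<Sum>k\<le>n. \<phi> (real k / real n) * Bernstein n k x) \<longlonglongrightarrow> \<phi> x"
proof (rule LIMSEQ_I)
  fix e :: real
  assume "0 < e"
  with Bernstein_Weierstrass[OF assms(1)] obtain N where "\<forall>n x. N \<le> n \<and> x \<in> {0..1} \<longrightarrow>
      \<bar>\<phi> x - (\<Sum>k\<le>n. \<phi> (real k / real n) * Bernstein n k x)\<bar> < e"
    by blast
  with assms(2) show
    "\<exists>N. \<forall>n\<ge>N. norm ((\<Sum>k\<le>n. \<phi> (real k / real n) * Bernstein n k x) - \<phi> x) < e"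
    by (auto simp: abs_minus_commute)
qed

lemma abs_Bernstein_sum_le:
  assumes "x \<in> {0..1}" and "\<And>k. k \<le> n \<Longrightarrow> \<bar>c k\<bar> \<le> C"
  shows "\<bar>\<Sum>k\<le>n. c k * Bernstein n k x\<bar> \<le> C"
proof -
  have "\<bar>\<Sum>k\<le>n. c k * Bernstein n k x\<bar> \<le> (\<Sum>k\<le>n. \<bar>c k\<bar> * Bernstein n k x)"
    using Bernstein_nonneg assms(1) by (auto intro: order_trans[OF sum_abs] simp: abs_mult)
  also have "\<dots> \<le> (\<Sum>k\<le>n. C * Bernstein n k x)"
    using Bernstein_nonneg assms by (intro sum_mono mult_right_mono) auto
  also have "\<dots> = C"
    by (simp flip: sum_distrib_left)
  finally show ?thesis .
qed

lemma (in finite_measure) integral_Bernstein_sum: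
  fixes X K :: "'a \<Rightarrow> real"
  assumes meas: "X \<in> borel_measurable M" "K \<in> borel_measurable M"
    and X: "\<And>x. x \<in> space M \<Longrightarrow> X x \<in> {0..1}" and K: "\<And>x. x \<in> space M \<Longrightarrow> \<bar>K x\<bar> \<le> c"
  shows "(\<integral>x. (\<Sum>k\<le>n. a k * Bernstein n k (X x)) * K x \<partial>M) =
    (\<Sum>k\<le>n. a k * real (n choose k) * (\<integral>x. X x ^ k * (1 - X x) ^ (n - k) * K x \<partial>M))"
proof -
  have integrable: "integrable M (\<lambda>x. X x ^ k * (1 - X x) ^ m * K x)" for k m
  proof (rule integrable_const_bound[where B=c])
    have "\<bar>X x ^ k * (1 - X x) ^ m * K x\<bar> \<le> c" if "x \<in> space M" for x
    proof -
      have "\<bar>X x ^ k * (1 - X x) ^ m\<bar> \<le> 1"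
        using X[OF that] by (auto intro!: mult_le_one power_le_one)
      then have "\<bar>X x ^ k * (1 - X x) ^ m\<bar> * \<bar>K x\<bar> \<le> \<bar>K x\<bar>"
        by (intro mult_left_le_one_le) auto
      then show ?thesis
        by (metis K[OF that] abs_mult order_trans)
    qed
    then show "AE x in M. norm (X x ^ k * (1 - X x) ^ m * K x) \<le> c"
      by (auto intro: AE_I2)
  qed (use meas in measurable)
  have "(\<Sum>k\<le>n. a k * Bernstein n k (X x)) * K x =
      (\<Sum>k\<le>n. (a k * real (n choose k)) * (X x ^ k * (1 - X x) ^ (n - k) * K x))" for x
    by (simp add: Bernstein_def sum_distrib_left sum_distrib_right mult_ac)
  then have "(\<integral>x. (\<Sum>k\<le>n. a k * Bernstein n k (X x)) * K x \<partial>M) =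
      (\<Sum>k\<le>n. \<integral>x. (a k * real (n choose k)) * (X x ^ k * (1 - X x) ^ (n - k) * K x) \<partial>M)"
    using integrable by (simp add: integral_sum)
  then show ?thesis
    by simp
qed

lemma (in finite_measure) integral_Bernstein_tendsto:
  fixes X K :: "'a \<Rightarrow> real" and \<phi> :: "real \<Rightarrow> real"
  assumes meas: "X \<in> borel_measurable M" "K \<in> borel_measurable M"
    and X: "\<And>x. x \<in> space M \<Longrightarrow> X x \<in> {0..1}" and K: "\<And>x. x \<in> space M \<Longrightarrow> \<bar>K x\<bar> \<le> c"
    and \<phi>: "continuous_on {0..1} \<phi>"
  shows "(\<lambda>n. \<Sum>k\<le>n. \<phi> (real k / real n) * real (n choose k) *
            (\<integral>x. X x ^ k * (1 - X x) ^ (n - k) * K x \<partial>M)) \<longlonglongrightarrow> (\<integral>x. \<phi> (X x) * K x \<partial>M)"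
proof -
  have "bounded (\<phi> ` {0..1})"
    by (intro compact_imp_bounded compact_continuous_image \<phi> compact_Icc)
  then obtain C where C: "\<And>t. t \<in> {0..1} \<Longrightarrow> \<bar>\<phi> t\<bar> \<le> C"
    unfolding bounded_iff by fastforce
  let ?B = "\<lambda>n x. (\<Sum>k\<le>n. \<phi> (real k / real n) * Bernstein n k (X x)) * K x"
  have "(\<lambda>n. \<integral>x. ?B n x \<partial>M) \<longlonglongrightarrow> (\<integral>x. \<phi> (X x) * K x \<partial>M)"
  proof (rule integral_bounded_convergence)
    show "?B n \<in> borel_measurable M" for n
      using meas unfolding Bernstein_def by measurable
    have "real k / real n \<in> {0..1}" if "k \<le> n" for k n
      using that by (cases "n = 0") (auto simp: divide_le_eq_1)
    moreover have "0 \<le> C"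
      using C[of 0] by force
    ultimately show "\<bar>?B n x\<bar> \<le> C * c" if "x \<in> space M" for n x
      unfolding abs_mult using X[OF that] K[OF that] C
      by (intro mult_mono abs_Bernstein_sum_le) auto
    show "(\<lambda>n. ?B n x) \<longlonglongrightarrow> \<phi> (X x) * K x" if "x \<in> space M" for x
      by (intro tendsto_mult_right Bernstein_sum_tendsto \<phi> X that)
  qed
  then show ?thesis
    by (simp add: integral_Bernstein_sum[OF meas X K])
qed

definition plateau :: "real \<Rightarrow> real \<Rightarrow> nat \<Rightarrow> real \<Rightarrow> real" where
  "plateau a b i t = max 0 (1 - real i * (max 0 (a - t) + max 0 (t - b)))"

lemma continuous_on_plateau: "continuous_on S (plateau a b i)"
  unfolding plateau_def by (intro continuous_intros)

lemma plateau_tendsto_indicator: "(\<lambda>i. plateau a b i t) \<longlonglongrightarrow> indicator {a..b} t"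
proof (cases "t \<in> {a..b}")
  case True
  then show ?thesis
    by (simp add: plateau_def)
next
  case False
  define d where "d = max 0 (a - t) + max 0 (t - b)"
  have "d > 0"
    using False by (auto simp: d_def max_def)
  obtain N :: nat where "1 / d < real N"
    using reals_Archimedean2 by blast
  then have "1 < real i * d" if "N \<le> i" for i
    using \<open>d > 0\<close> that by (auto simp: field_simps intro: order.strict_trans2 mult_right_mono)
  then have "\<forall>\<^sub>F i in sequentially. plateau a b i t = 0"
    unfolding plateau_def d_def[symmetric] by (intro eventually_sequentiallyI[of N]) simp
  then show ?thesis
    using False by (simp add: tendsto_eventually)
qed

lemma (in finite_measure) integral_plateau_tendsto:
  fixes X K :: "'a \<Rightarrow> real"
  assumes meas: "X \<in> borel_measurable M" "K \<in> borel_measurable M"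
    and K: "\<And>x. x \<in> space M \<Longrightarrow> \<bar>K x\<bar> \<le> c"
  shows "(\<lambda>i. \<integral>x. plateau a b i (X x) * K x \<partial>M) \<longlonglongrightarrow> (\<integral>x. indicator {a..b} (X x) * K x \<partial>M)"
proof (rule integral_bounded_convergence)
  show "(\<lambda>x. plateau a b i (X x) * K x) \<in> borel_measurable M" for i
    using meas unfolding plateau_def by measurable
  show "\<bar>plateau a b i (X x) * K x\<bar> \<le> c" if "x \<in> space M" for i x
    using K[OF that]
    by (auto simp: plateau_def abs_mult intro: order_trans[OF mult_left_le_one_le])
qed (auto intro: tendsto_mult_right plateau_tendsto_indicator)

lemma integral_indicator_eq_if_moments_eq:
  fixes X K :: "'a \<Rightarrow> real"
  assumes fin: "finite_measure M1" "finite_measure M2" and sets_eq: "sets M1 = sets M2"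
    and meas: "X \<in> borel_measurable M1" "K \<in> borel_measurable M1"
    and X: "\<And>x. x \<in> space M1 \<Longrightarrow> X x \<in> {0..1}" and K: "\<And>x. x \<in> space M1 \<Longrightarrow> \<bar>K x\<bar> \<le> c"
    and moments: "\<And>k m. (\<integral>x. X x ^ k * (1 - X x) ^ m * K x \<partial>M1) =
      (\<integral>x. X x ^ k * (1 - X x) ^ m * K x \<partial>M2)"
  shows "(\<integral>x. indicator {a..b} (X x) * K x \<partial>M1) = (\<integral>x. indicator {a..b} (X x) * K x \<partial>M2)"
proof -
  have meas2: "X \<in> borel_measurable M2" "K \<in> borel_measurable M2"
    using meas measurable_cong_sets[OF sets_eq refl] by auto
  have X2: "\<And>x. x \<in> space M2 \<Longrightarrow> X x \<in> {0..1}" and K2: "\<And>x. x \<in> space M2 \<Longrightarrow> \<bar>K x\<bar> \<le> c"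
    using X K sets_eq_imp_space_eq[OF sets_eq] by auto
  let ?B = "\<lambda>M \<phi> n. \<Sum>k\<le>n. \<phi> (real k / real n) * real (n choose k) *
    (\<integral>x. X x ^ k * (1 - X x) ^ (n - k) * K x \<partial>M)"
  have plateau_eq: "(\<integral>x. plateau a b i (X x) * K x \<partial>M1) = (\<integral>x. plateau a b i (X x) * K x \<partial>M2)"
    for i
  proof -
    have "?B M1 (plateau a b i) \<longlonglongrightarrow> (\<integral>x. plateau a b i (X x) * K x \<partial>M1)"
      by (rule finite_measure.integral_Bernstein_tendsto[OF fin(1) meas])
        (fact X K continuous_on_plateau)+
    moreover have "?B M2 (plateau a b i) \<longlonglongrightarrow> (\<integral>x. plateau a b i (X x) * K x \<partial>M2)"
      by (rule finite_measure.integral_Bernstein_tendsto[OF fin(2) meas2])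
        (fact X2 K2 continuous_on_plateau)+
    ultimately show ?thesis
      unfolding moments by (rule LIMSEQ_unique)
  qed
  have "(\<lambda>i. \<integral>x. plateau a b i (X x) * K x \<partial>M1) \<longlonglongrightarrow> (\<integral>x. indicator {a..b} (X x) * K x \<partial>M1)"
    by (rule finite_measure.integral_plateau_tendsto[OF fin(1) meas]) (fact K)
  moreover have
    "(\<lambda>i. \<integral>x. plateau a b i (X x) * K x \<partial>M2) \<longlonglongrightarrow> (\<integral>x. indicator {a..b} (X x) * K x \<partial>M2)"
    by (rule finite_measure.integral_plateau_tendsto[OF fin(2) meas2]) (fact K2)
  ultimately show ?thesis
    unfolding plateau_eq by (rule LIMSEQ_unique)
qed

section \<open>Cylinder sets generate the Borel sets of \<open>C\<^sub>*\<close>\<close>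

lemma CstarD:
  assumes "f \<in> Cstar"
  shows "f (x + 1) = f x" "0 \<le> f x" "f x \<le> 1" "\<exists>x. f x \<noteq> 0" "\<exists>x. f x \<noteq> 1"
  using assms unfolding Cstar_def by auto

lemma isCont_apply_bcontfun: "isCont (\<lambda>f :: 'a::topological_space \<Rightarrow>\<^sub>C 'b::metric_space. f y) f"
  unfolding continuous_at_eps_delta by (metis dist_bounded le_less_trans)

definition cylinder :: "(real \<times> real \<times> real) list \<Rightarrow> (real \<Rightarrow>\<^sub>C real) set" where
  "cylinder I = {f \<in> Cstar. \<forall>(y, a, b) \<in> set I. f y \<in> {a..b}}"

lemma cylinder_Nil [simp]: "cylinder [] = Cstar"
  by (simp add: cylinder_def)

lemma cylinder_append: "cylinder (I @ J) = cylinder I \<inter> cylinder J"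
  unfolding cylinder_def set_append ball_Un by blast

lemma cylinder_subset: "cylinder I \<subseteq> Cstar"
  by (auto simp: cylinder_def)

lemma indicator_cylinder_Cons:
  "indicator (cylinder ((y, a, b) # I)) f =
    indicator {a..b} (f y) * (indicator (cylinder I) f :: real)"
  by (auto simp: cylinder_def indicator_def)

lemma cylinder_in_sets_borel: "cylinder I \<in> sets (restrict_space borel Cstar)"
proof -
  let ?C = "\<Inter>(y, a, b) \<in> set I. (\<lambda>f :: real \<Rightarrow>\<^sub>C real. f y) -` {a..b}"
  have "closed ((\<lambda>f :: real \<Rightarrow>\<^sub>C real. f y) -` {a..b})" for y a b
    by (intro continuous_closed_vimage closed_atLeastAtMost isCont_apply_bcontfun)
  then have "closed ?C"
    by (auto intro!: closed_INT)
  moreover have "cylinder I = Cstar \<inter> ?C"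
    by (auto simp: cylinder_def)
  ultimately show ?thesis
    unfolding sets_restrict_space by (auto intro: borel_closed)
qed

lemma periodic_grid_approx:
  fixes F :: "real \<Rightarrow> real"
  assumes cont: "continuous_on UNIV F" and periodic: "\<And>x. F (x + 1) = F x" and "0 < e"
  obtains k where "0 < k" "\<And>x. \<bar>F x - F (real (nat \<lfloor>real k * frac x\<rfloor>) / real k)\<bar> < e"
proof -
  interpret periodic_fun_simple' F
    by unfold_locales (rule periodic)
  have "uniformly_continuous_on {0..1} F"
    using cont by (intro compact_uniformly_continuous) (auto intro: continuous_on_subset)
  then obtain \<delta> where "\<delta> > 0"
    and \<delta>: "\<And>x x'. x \<in> {0..1} \<Longrightarrow> x' \<in> {0..1} \<Longrightarrow> dist x' x < \<delta> \<Longrightarrow> dist (F x') (F x) < e"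
    using \<open>0 < e\<close> unfolding uniformly_continuous_on_def by metis
  obtain k :: nat where k: "1 / \<delta> < real k"
    using reals_Archimedean2 by blast
  then have "0 < real k"
    using \<open>\<delta> > 0\<close> by (smt (verit) divide_pos_pos)
  have "1 < \<delta> * real k"
    using k \<open>\<delta> > 0\<close> by (simp add: field_simps)
  then have "1 / real k < \<delta>"
    using \<open>0 < real k\<close> by (simp add: field_simps)
  show ?thesis
  proof (rule that)
    show "0 < k"
      using \<open>0 < real k\<close> by simp
    fix x
    define p where "p = real (nat \<lfloor>real k * frac x\<rfloor>) / real k"
    have frac: "0 \<le> frac x" "frac x < 1"
      by (auto simp: frac_lt_1)
    note p = floor_mult_div_approx[OF frac \<open>0 < k\<close>, folded p_def]
    have "p \<in> {0..1}"
      using p(1) \<open>0 < real k\<close> by (simp add: p_def divide_le_eq_1)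
    moreover have "dist p (frac x) < \<delta>"
      unfolding dist_real_def by (rule order.strict_trans[OF p(2) \<open>1 / real k < \<delta>\<close>])
    ultimately have "dist (F p) (F (frac x)) < e"
      using frac by (intro \<delta>) auto
    moreover have "F (frac x) = F x"
      unfolding frac_def by (rule minus_of_int)
    ultimately show "\<bar>F x - F p\<bar> < e"
      by (simp add: dist_real_def abs_minus_commute)
  qed
qed

lemma exists_rat_approx:
  assumes "0 < e"
  shows "\<exists>q. \<bar>real_of_rat q - y\<bar> < e"
proof -
  obtain q where "y < real_of_rat q" "real_of_rat q < y + e"
    using of_rat_dense[of y "y + e"] assms by auto
  then show ?thesis
    by (intro exI[of _ q]) auto
qed

definition step_fun :: "nat \<Rightarrow> rat list \<Rightarrow> real \<Rightarrow> real" where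
  "step_fun k v x = real_of_rat (v ! nat \<lfloor>real k * frac x\<rfloor>)"

lemma periodic_step_fun_approx:
  fixes F :: "real \<Rightarrow> real"
  assumes cont: "continuous_on UNIV F" and periodic: "\<And>x. F (x + 1) = F x" and "0 < e"
  obtains k v where "\<And>x. \<bar>F x - step_fun k v x\<bar> < e"
proof -
  obtain k where "0 < k" and k: "\<And>x. \<bar>F x - F (real (nat \<lfloor>real k * frac x\<rfloor>) / real k)\<bar> < e / 2"
    using periodic_grid_approx[OF cont periodic, of "e / 2"] \<open>0 < e\<close> by auto
  have "\<exists>c. \<forall>y. \<bar>real_of_rat (c y) - y\<bar> < e / 2"
    using \<open>0 < e\<close> by (intro choice allI exists_rat_approx) simp
  then obtain c where c: "\<And>y. \<bar>real_of_rat (c y) - y\<bar> < e / 2"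
    by blast
  show ?thesis
  proof (rule that)
    fix x
    define t where "t = F (real (nat \<lfloor>real k * frac x\<rfloor>) / real k)"
    have "nat \<lfloor>real k * frac x\<rfloor> < k"
      using \<open>0 < k\<close> by (intro floor_mult_div_approx) (auto simp: frac_lt_1)
    then have "step_fun k (map (\<lambda>j. c (F (real j / real k))) [0..<k]) x = real_of_rat (c t)"
      by (simp add: step_fun_def t_def)
    then show "\<bar>F x - step_fun k (map (\<lambda>j. c (F (real j / real k))) [0..<k]) x\<bar> < e"
      using k[of x, folded t_def] c[of t] by linarith
  qed
qed

text \<open>Closed uniform neighbourhoods of rational step functions, tested only at rational points so
  that each is a countable intersection of cylinders.\<close>

definition rat_box :: "nat \<times> rat list \<times> rat \<Rightarrow> (real \<Rightarrow>\<^sub>C real) set" where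
  "rat_box = (\<lambda>(k, v, r). {f \<in> Cstar. \<forall>q \<in> \<rat>. \<bar>f q - step_fun k v q\<bar> \<le> real_of_rat r})"

lemma rat_box_subset: "rat_box i \<subseteq> Cstar"
  by (auto simp: rat_box_def split: prod.splits)

lemma rat_box_eq_INT_cylinder:
  "rat_box (k, v, r) =
    (\<Inter>q \<in> \<rat>. cylinder [(q, step_fun k v q - real_of_rat r, step_fun k v q + real_of_rat r)])"
    (is "_ = ?C")
proof (intro set_eqI iffI)
  fix f
  assume "f \<in> rat_box (k, v, r)"
  then show "f \<in> ?C"
    by (auto simp: rat_box_def cylinder_def abs_le_iff)
next
  fix f
  assume f: "f \<in> ?C"
  then have "f \<in> Cstar"
    using Rats_0 by (auto simp: cylinder_def)
  moreover have "\<bar>f q - step_fun k v q\<bar> \<le> real_of_rat r" if "q \<in> \<rat>" for q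
    using f that by (auto simp: cylinder_def abs_le_iff)
  ultimately show "f \<in> rat_box (k, v, r)"
    by (simp add: rat_box_def)
qed

lemma rat_box_in_sigma: "rat_box i \<in> sigma_sets Cstar (range cylinder)"
proof -
  interpret sigma_algebra Cstar "sigma_sets Cstar (range cylinder)"
    by (rule sigma_algebra_sigma_sets) (auto simp: cylinder_def)
  obtain k v r where i: "i = (k, v, r)"
    by (cases i) auto
  show ?thesis
    unfolding i rat_box_eq_INT_cylinder using Rats_0 by (intro countable_INT' countable_rat) auto
qed

lemma dist_le_if_rat_bound:
  fixes f g :: "real \<Rightarrow>\<^sub>C real"
  assumes "\<And>q. q \<in> \<rat> \<Longrightarrow> \<bar>f q - g q\<bar> \<le> c"
  shows "dist f g \<le> c"
proof (rule dist_bound)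
  have "closed {x. \<bar>f x - g x\<bar> \<le> c}"
    by (intro closed_Collect_le continuous_intros continuous_on_apply_bcontfun)
  then have "closure \<rat> \<subseteq> {x. \<bar>f x - g x\<bar> \<le> c}"
    using assms by (intro closure_minimal) auto
  then show "dist (f x) (g x) \<le> c" for x
    by (auto simp: Rats_closure_real dist_real_def)
qed

lemma exists_rat_box_between:
  assumes "open U" "f \<in> Cstar" "f \<in> U"
  shows "\<exists>i. f \<in> rat_box i \<and> rat_box i \<subseteq> U"
proof -
  obtain e where "e > 0" and e: "ball f e \<subseteq> U"
    using assms(1,3) open_contains_ball by blast
  obtain k v where kv: "\<And>x. \<bar>f x - step_fun k v x\<bar> < e / 4"
    by (rule periodic_step_fun_approx[of "\<lambda>x. f x" "e / 4"])
      (use CstarD(1)[OF assms(2)] \<open>e > 0\<close> in auto)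
  obtain r :: rat where r: "e / 4 < real_of_rat r" "real_of_rat r < e / 2"
    using of_rat_dense[of "e / 4" "e / 2"] \<open>e > 0\<close> by auto
  have "\<bar>f q - step_fun k v q\<bar> \<le> real_of_rat r" for q
    using kv[of q] r(1) by linarith
  then have "f \<in> rat_box (k, v, r)"
    using assms(2) by (simp add: rat_box_def)
  moreover have "rat_box (k, v, r) \<subseteq> U"
  proof
    fix h
    assume h: "h \<in> rat_box (k, v, r)"
    have "\<bar>h q - f q\<bar> \<le> 3 * e / 4" if "q \<in> \<rat>" for q
    proof -
      have "\<bar>h q - step_fun k v q\<bar> \<le> real_of_rat r"
        using h that by (simp add: rat_box_def)
      then show ?thesis
        using kv[of q] r(2) by linarith
    qed
    then have "dist h f \<le> 3 * e / 4"
      by (rule dist_le_if_rat_bound)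
    then have "h \<in> ball f e"
      using \<open>e > 0\<close> by (simp add: dist_commute)
    then show "h \<in> U"
      using e by blast
  qed
  ultimately show ?thesis
    by blast
qed

lemma sets_restrict_space_Cstar:
  "sets (restrict_space borel Cstar) = sigma_sets Cstar (range cylinder)"
proof (rule antisym)
  show "sigma_sets Cstar (range cylinder) \<subseteq> sets (restrict_space borel Cstar)"
    using cylinder_in_sets_borel cylinder_in_sets_borel[of "[]"]
    by (intro sets.sigma_sets_subset') auto
  have "sets (restrict_space borel Cstar) =
      {(\<lambda>f. f) -` U \<inter> Cstar | U. U \<in> sigma_sets UNIV {U. open U}}"
    by (auto simp: sets_restrict_space sets_borel)
  also have "\<dots> = sigma_sets Cstar {(\<lambda>f. f) -` U \<inter> Cstar | U. U \<in> {U. open U}}"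
    by (rule sigma_sets_vimage_commute) auto
  also have "\<dots> \<subseteq> sigma_sets Cstar (range cylinder)"
  proof (rule sigma_sets_mono, safe)
    interpret sigma_algebra Cstar "sigma_sets Cstar (range cylinder)"
      by (rule sigma_algebra_sigma_sets) (auto simp: cylinder_def)
    fix U :: "(real \<Rightarrow>\<^sub>C real) set"
    assume "open U"
    have "(\<lambda>f. f) -` U \<inter> Cstar = (\<Union>i \<in> {i. rat_box i \<subseteq> U}. rat_box i)"
    proof
      show "(\<lambda>f. f) -` U \<inter> Cstar \<subseteq> (\<Union>i \<in> {i. rat_box i \<subseteq> U}. rat_box i)"
        using exists_rat_box_between[OF \<open>open U\<close>] by blast
      show "(\<Union>i \<in> {i. rat_box i \<subseteq> U}. rat_box i) \<subseteq> (\<lambda>f. f) -` U \<inter> Cstar"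
        using rat_box_subset by blast
    qed
    also have "\<dots> \<in> sigma_sets Cstar (range cylinder)"
      by (intro countable_UN'' countableI_type rat_box_in_sigma)
    finally show "(\<lambda>f. f) -` U \<inter> Cstar \<in> sigma_sets Cstar (range cylinder)" .
  qed
  finally show "sets (restrict_space borel Cstar) \<subseteq> sigma_sets Cstar (range cylinder)" .
qed

section \<open>Finite measures on \<open>C\<^sub>*\<close> and their mixed moments\<close>

lemma borel_measurable_prod_list_map:
  fixes g :: "'b \<Rightarrow> 'a \<Rightarrow> real"
  assumes "\<And>y. y \<in> set ys \<Longrightarrow> g y \<in> borel_measurable M"
  shows "(\<lambda>x. prod_list (map (\<lambda>y. g y x) ys)) \<in> borel_measurable M"
  using assms by (induction ys) auto

definition eval_monomial :: "real list \<Rightarrow> real list \<Rightarrow> (real \<Rightarrow>\<^sub>C real) \<Rightarrow> real" where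
  "eval_monomial w u f = prod_list (map (\<lambda>y. 1 - f y) w) * prod_list (map (\<lambda>y. f y) u)"

lemma eval_monomial_Cons_right:
  "eval_monomial w (y # u) f = eval_monomial w u f - eval_monomial (y # w) u f"
  by (simp add: eval_monomial_def algebra_simps)

lemma eval_monomial_replicate: "eval_monomial (replicate m x @ w) (replicate k x @ u) f =
    f x ^ k * (1 - f x) ^ m * eval_monomial w u f"
  by (simp add: eval_monomial_def)

lemma calE_eq_eval_monomial: "calE xs ys f = eval_monomial xs [] f - eval_monomial (xs @ ys) [] f"
  by (simp add: calE_def eval_monomial_def algebra_simps)

lemma eval_monomial_unit:
  assumes "f \<in> Cstar"
  shows "0 \<le> eval_monomial w u f" "eval_monomial w u f \<le> 1"
proof -
  have "0 \<le> f y" "f y \<le> 1" for y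
    using CstarD[OF assms] by auto
  then show "0 \<le> eval_monomial w u f" "eval_monomial w u f \<le> 1"
    unfolding eval_monomial_def
    by (auto intro!: mult_le_one mult_nonneg_nonneg prod_list_nonneg prod_list_le_one)
qed

lemma abs_indicator_cylinder_mult_eval_monomial_le:
  "\<bar>indicator (cylinder I) f * eval_monomial w u f\<bar> \<le> 1"
  using eval_monomial_unit[of f] cylinder_subset[of I] by (auto simp: indicator_def)

lemma eval_monomial_grid_tendsto_0:
  assumes "f \<in> Cstar"
  shows "(\<lambda>k. eval_monomial (grid k) [] f) \<longlonglongrightarrow> 0"
    and "(\<lambda>k. eval_monomial [] (grid k) f) \<longlonglongrightarrow> 0"
proof -
  obtain z0 z1 where "f z0 \<noteq> 0" "f z1 \<noteq> 1"
    using CstarD(4,5)[OF assms] by blast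
  have "(\<lambda>k. prod_list (map (\<lambda>y. 1 - f y) (grid k))) \<longlonglongrightarrow> 0"
    by (rule prod_grid_tendsto_0[where z=z0])
      (use CstarD[OF assms] \<open>f z0 \<noteq> 0\<close> in \<open>auto intro!: continuous_intros\<close>)
  then show "(\<lambda>k. eval_monomial (grid k) [] f) \<longlonglongrightarrow> 0"
    by (simp add: eval_monomial_def)
  have "(\<lambda>k. prod_list (map (\<lambda>y. f y) (grid k))) \<longlonglongrightarrow> 0"
    by (rule prod_grid_tendsto_0[where z=z1]) (use CstarD[OF assms] \<open>f z1 \<noteq> 1\<close> in auto)
  then show "(\<lambda>k. eval_monomial [] (grid k) f) \<longlonglongrightarrow> 0"
    by (simp add: eval_monomial_def)
qed

locale Cstar_finite_measure = finite_measure M for M :: "(real \<Rightarrow>\<^sub>C real) measure" +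
  assumes sets_eq_Cstar: "sets M = sets (restrict_space borel Cstar)"
begin

lemma space_eq_Cstar: "space M = Cstar"
  using sets_eq_imp_space_eq[OF sets_eq_Cstar] by (simp add: space_restrict_space)

lemma measurable_eval [measurable]: "(\<lambda>f :: real \<Rightarrow>\<^sub>C real. f y) \<in> borel_measurable M"
proof -
  have "continuous_on UNIV (\<lambda>f :: real \<Rightarrow>\<^sub>C real. f y)"
    by (simp add: continuous_at_imp_continuous_on isCont_apply_bcontfun)
  then have "(\<lambda>f :: real \<Rightarrow>\<^sub>C real. f y) \<in> borel_measurable (restrict_space borel Cstar)"
    by (intro measurable_restrict_space1 borel_measurable_continuous_onI)
  then show ?thesis
    using measurable_cong_sets[OF sets_eq_Cstar refl] by blast
qed

lemma measurable_eval_monomial [measurable]: "eval_monomial w u \<in> borel_measurable M"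
  unfolding eval_monomial_def
  by (intro borel_measurable_times borel_measurable_prod_list_map) simp_all

lemma cylinder_in_sets [measurable]: "cylinder I \<in> sets M"
  using cylinder_in_sets_borel sets_eq_Cstar by simp

lemma integrable_eval_monomial: "integrable M (eval_monomial w u)"
proof (rule integrable_const_bound[where B=1])
  show "AE f in M. norm (eval_monomial w u f) \<le> 1"
    using eval_monomial_unit by (intro AE_I2) (simp add: space_eq_Cstar)
qed simp

lemma integral_eval_monomial_tendsto_0:
  assumes "\<And>f. f \<in> Cstar \<Longrightarrow> (\<lambda>k. eval_monomial (w k) (u k) f) \<longlonglongrightarrow> 0"
  shows "(\<lambda>k. \<integral>f. eval_monomial (w k) (u k) f \<partial>M) \<longlonglongrightarrow> 0"
proof -
  have "(\<lambda>k. \<integral>f. eval_monomial (w k) (u k) f \<partial>M) \<longlonglongrightarrow> (\<integral>f. 0 \<partial>M)"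
  proof (rule integral_bounded_convergence[where B=1])
    fix f
    assume "f \<in> space M"
    then have "f \<in> Cstar"
      by (simp add: space_eq_Cstar)
    then show "\<bar>eval_monomial (w k) (u k) f\<bar> \<le> 1" for k
      using eval_monomial_unit by simp
    show "(\<lambda>k. eval_monomial (w k) (u k) f) \<longlonglongrightarrow> 0"
      using assms \<open>f \<in> Cstar\<close> by simp
  qed simp
  then show ?thesis
    by simp
qed

end

locale Cstar_measure_pair = M1: Cstar_finite_measure M1 + M2: Cstar_finite_measure M2
  for M1 M2 :: "(real \<Rightarrow>\<^sub>C real) measure"
begin

lemma integral_cylinder_eval_monomial_eq:
  assumes monomial_eq: "\<And>w u. (\<integral>f. eval_monomial w u f \<partial>M1) = (\<integral>f. eval_monomial w u f \<partial>M2)"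
  shows "(\<integral>f. indicator (cylinder I) f * eval_monomial w u f \<partial>M1) =
    (\<integral>f. indicator (cylinder I) f * eval_monomial w u f \<partial>M2)"
proof (induction I arbitrary: w u)
  case Nil
  have "(\<integral>f. indicator Cstar f * eval_monomial w u f \<partial>M) = (\<integral>f. eval_monomial w u f \<partial>M)"
    if "space M = Cstar" for M
    using that by (intro Bochner_Integration.integral_cong) auto
  then show ?case
    using monomial_eq M1.space_eq_Cstar M2.space_eq_Cstar by simp
next
  case (Cons p I)
  obtain x a b where p: "p = (x, a, b)"
    by (cases p)
  define K where "K f = indicator (cylinder I) f * eval_monomial w u f" for f
  have "(\<integral>f. indicator {a..b} (apply_bcontfun f x) * K f \<partial>M1) =
      (\<integral>f. indicator {a..b} (apply_bcontfun f x) * K f \<partial>M2)"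
  proof (rule integral_indicator_eq_if_moments_eq[where c=1])
    show "finite_measure M1" "finite_measure M2"
      by (fact M1.finite_measure_axioms M2.finite_measure_axioms)+
    show "sets M1 = sets M2"
      by (simp add: M1.sets_eq_Cstar M2.sets_eq_Cstar)
    show "(\<lambda>f. apply_bcontfun f x) \<in> borel_measurable M1" "K \<in> borel_measurable M1"
      unfolding K_def by measurable
    show "apply_bcontfun f x \<in> {0..1}" if "f \<in> space M1" for f
      using CstarD[of f] that M1.space_eq_Cstar by simp
    show "\<bar>K f\<bar> \<le> 1" for f
      unfolding K_def by (rule abs_indicator_cylinder_mult_eval_monomial_le)
    show "(\<integral>f. apply_bcontfun f x ^ k * (1 - apply_bcontfun f x) ^ m * K f \<partial>M1) =
        (\<integral>f. apply_bcontfun f x ^ k * (1 - apply_bcontfun f x) ^ m * K f \<partial>M2)" for k m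
      using Cons.IH[of "replicate m x @ w" "replicate k x @ u"]
      by (simp add: K_def eval_monomial_replicate mult_ac)
  qed
  then show ?case
    by (simp add: p K_def indicator_cylinder_Cons mult.assoc)
qed

lemma measure_eqI_integral_eval_monomial:
  assumes "\<And>w u. (\<integral>f. eval_monomial w u f \<partial>M1) = (\<integral>f. eval_monomial w u f \<partial>M2)"
  shows "M1 = M2"
proof (rule measure_eqI_generator_eq[where \<Omega>=Cstar and E="range cylinder" and A="\<lambda>_. Cstar"])
  show "Int_stable (range cylinder)"
    by (auto simp: Int_stable_def cylinder_append[symmetric])
  show "range cylinder \<subseteq> Pow Cstar"
    using cylinder_subset by auto
  show "sets M1 = sigma_sets Cstar (range cylinder)" "sets M2 = sigma_sets Cstar (range cylinder)"
    by (simp_all add: M1.sets_eq_Cstar M2.sets_eq_Cstar sets_restrict_space_Cstar)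
  show "range (\<lambda>_. Cstar) \<subseteq> range cylinder"
    using cylinder_Nil by blast
  show "(\<Union>i::nat. Cstar) = Cstar" "emeasure M1 Cstar \<noteq> \<infinity>"
    by (simp_all add: M1.emeasure_finite)
  fix X
  assume "X \<in> range cylinder"
  then obtain I where X: "X = cylinder I"
    by blast
  have "measure M (cylinder I) = (\<integral>f. indicator (cylinder I) f * eval_monomial [] [] f \<partial>M)"
    if "Cstar_finite_measure M" for M
  proof -
    interpret Cstar_finite_measure M
      by (fact that)
    show ?thesis
      by (simp add: eval_monomial_def emeasure_finite)
  qed
  then have "measure M1 X = measure M2 X"
    using integral_cylinder_eval_monomial_eq[OF assms, of I "[]" "[]"] X
      M1.Cstar_finite_measure_axioms M2.Cstar_finite_measure_axioms by simp
  then show "emeasure M1 X = emeasure M2 X"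
    by (simp add: M1.emeasure_eq_measure M2.emeasure_eq_measure)
qed

end

locale Cstar_measure_pair_calE = Cstar_measure_pair +
  assumes integral_calE_eq:
    "\<And>xs ys. xs \<noteq> [] \<Longrightarrow> ys \<noteq> [] \<Longrightarrow> (\<integral>f. calE xs ys f \<partial>M1) = (\<integral>f. calE xs ys f \<partial>M2)"
begin

definition gap :: "real list \<Rightarrow> real" where
  "gap w = (\<integral>f. eval_monomial w [] f \<partial>M1) - (\<integral>f. eval_monomial w [] f \<partial>M2)"

lemma gap_append: "xs \<noteq> [] \<Longrightarrow> ys \<noteq> [] \<Longrightarrow> gap (xs @ ys) = gap xs"
  using integral_calE_eq[of xs ys]
  by (simp add: gap_def calE_eq_eval_monomial M1.integrable_eval_monomial
      M2.integrable_eval_monomial)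

lemma gap_swap: "gap [x, y] = gap [y, x]"
  by (simp add: gap_def eval_monomial_def mult.commute)

lemma gap_eq_gap_0: "w \<noteq> [] \<Longrightarrow> gap w = gap [0]"
proof -
  assume "w \<noteq> []"
  then obtain x r where w: "w = x # r"
    by (cases w) auto
  have "gap w = gap [x]"
    using gap_append[of "[x]" r] by (cases "r = []") (simp_all add: w)
  also have "\<dots> = gap [0, x]"
    using gap_append[of "[x]" "[0]"] gap_swap[of x 0] by simp
  also have "\<dots> = gap [0]"
    using gap_append[of "[0]" "[x]"] by simp
  finally show ?thesis .
qed

lemma gap_eq_0: "w \<noteq> [] \<Longrightarrow> gap w = 0"
proof -
  assume "w \<noteq> []"
  have "(\<lambda>k. gap (grid k)) \<longlonglongrightarrow> 0 - 0"
    unfolding gap_def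
    by (intro tendsto_diff M1.integral_eval_monomial_tendsto_0
        M2.integral_eval_monomial_tendsto_0 eval_monomial_grid_tendsto_0)
  then have "(\<lambda>k. gap (grid (Suc k))) \<longlonglongrightarrow> 0"
    by (intro LIMSEQ_Suc) simp
  moreover have "gap (grid (Suc k)) = gap [0]" for k
    by (rule gap_eq_gap_0) (simp add: grid_def)
  ultimately have "gap [0] = 0"
    by (simp add: LIMSEQ_const_iff)
  then show ?thesis
    using gap_eq_gap_0[OF \<open>w \<noteq> []\<close>] by simp
qed

lemma integral_eval_monomial_diff_eq_gap:
  "(\<integral>f. eval_monomial w u f \<partial>M1) - (\<integral>f. eval_monomial w u f \<partial>M2) = gap w"
proof (induction u arbitrary: w)
  case Nil
  then show ?case
    by (simp add: gap_def)
next
  case (Cons y u)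
  have "(\<integral>f. eval_monomial w (y # u) f \<partial>M) =
      (\<integral>f. eval_monomial w u f \<partial>M) - (\<integral>f. eval_monomial (y # w) u f \<partial>M)"
    if "Cstar_finite_measure M" for M
    using Cstar_finite_measure.integrable_eval_monomial[OF that]
    by (simp add: eval_monomial_Cons_right)
  then show ?case
    using Cons.IH[of w] Cons.IH[of "y # w"] gap_eq_0[of "y # w"]
      M1.Cstar_finite_measure_axioms M2.Cstar_finite_measure_axioms by simp
qed

lemma gap_Nil: "gap [] = 0"
proof -
  have "(\<lambda>k. (\<integral>f. eval_monomial [] (grid k) f \<partial>M1) - (\<integral>f. eval_monomial [] (grid k) f \<partial>M2))
      \<longlonglongrightarrow> 0 - 0"
    by (intro tendsto_diff M1.integral_eval_monomial_tendsto_0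
        M2.integral_eval_monomial_tendsto_0 eval_monomial_grid_tendsto_0)
  then show ?thesis
    by (simp add: integral_eval_monomial_diff_eq_gap LIMSEQ_const_iff)
qed

lemma integral_eval_monomial_eq:
  "(\<integral>f. eval_monomial w u f \<partial>M1) = (\<integral>f. eval_monomial w u f \<partial>M2)"
  using integral_eval_monomial_diff_eq_gap[of w u] gap_Nil gap_eq_0[of w] by (cases "w = []") auto

end

theorem lemma3p3:
  fixes M1 M2 :: "(real \<Rightarrow>\<^sub>C real) measure"
  assumes "sets M1 = sets (restrict_space borel Cstar)"
    and "sets M2 = sets (restrict_space borel Cstar)"
    and "finite_measure M1" and "finite_measure M2"
    and "\<And>xs ys. xs \<noteq> [] \<Longrightarrow> ys \<noteq> [] \<Longrightarrow>
           (\<integral>f. calE xs ys f \<partial>M1) = (\<integral>f. calE xs ys f \<partial>M2)"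
  shows "M1 = M2"
proof -
  interpret Cstar_measure_pair_calE M1 M2
    by (intro Cstar_measure_pair_calE.intro Cstar_measure_pair.intro Cstar_finite_measure.intro
        Cstar_finite_measure_axioms.intro Cstar_measure_pair_calE_axioms.intro assms)
  show ?thesis
    by (rule measure_eqI_integral_eval_monomial[OF integral_eval_monomial_eq])
qed

end
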